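(* Let $N_f \ge 1$ be an integer, $\beta>0$, $\lambda>0$ and $r_c>0$. Let $p_r(i)=i^{-\beta}/\sum_{k=1}^{N_f}k^{-\beta}$ for $i=1,\dots,N_f$. Consider the optimization problem \[ \max_{p_c(1),\dots,p_c(N_f)} \ \sum_{i=1}^{N_f}p_r(i)\left(1-e^{-\lambda p_c(i)\pi r_c^2}\right)\quad \text{s.t.}\quad \sum_{i=1}^{N_f}p_c(i)=1,\ \ p_c(i)\ge 0,\ i=1,\dots,N_f, \] and denote its optimal solution by $p_c^*(i)$, $i=1,\dots,N_f$. If $\frac{N_f^{N_f}}{N_f!} < e^{\frac{\lambda\pi r_c^2}{\beta}}$, then \[ p_c^*(i)=\frac{\beta}{\lambda\pi r_c^2 N_f}\sum_{j=1}^{N_f}\ln\Big(\frac{j}{i}\Big)+\frac{1}{N_f},\qquad i=1,\dots,N_f. \] Otherwise, \[ p_c^*(i)=\begin{cases}\frac{\beta}{\lambda\pi r_c^2 i^*}\sum_{j=1}^{i^*}\ln\Big(\frac{j}{i}\Big)+\frac{1}{i^*}, & i\le i^*,\\ 0, & i^*<i\le N_f,\end{cases} \] where the integer $i^*$ satisfies $\frac{(i^*+1)^{i^*}}{i^*!}\ge e^{\frac{\lambda\pi r_c^2}{\beta}}$, $\frac{(i^* )^{i^*}}{i^*!}< e^{\frac{\lambda\pi r_c^2}{\beta}}$, and $\frac{\lambda\pi r_c^2}{\beta}-1\le i^*\le \frac{\lambda\pi r_c^2}{\beta}+\ln(\sqrt{2\pi N_f})+1$.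
   Context: Interpretation: users form a Poisson point process of density $\lambda$; $p_r(i)$ (Zipf distribution with parameter $\beta$) is the probability a user requests file $i$ out of $N_f$ files; $p_c(i)$ is the probability a user caches file $i$; $r_c$ is the collaboration distance; the objective is the offloading ratio. *)

theory Defs
  imports Complex_Main
begin

definition zipf :: "nat \<Rightarrow> real \<Rightarrow> nat \<Rightarrow> real" where
  "zipf Nf \<beta> i = (real i powr (-\<beta>)) / (\<Sum>k=1..Nf. real k powr (-\<beta>))"

definition offload :: "nat \<Rightarrow> real \<Rightarrow> real \<Rightarrow> real \<Rightarrow> (nat \<Rightarrow> real) \<Rightarrow> real" where
  "offload Nf \<beta> lam rc pc =
     (\<Sum>i=1..Nf. zipf Nf \<beta> i * (1 - exp (- lam * pc i * pi * rc^2)))"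

definition feasible :: "nat \<Rightarrow> (nat \<Rightarrow> real) \<Rightarrow> bool" where
  "feasible Nf pc \<longleftrightarrow> (\<Sum>i=1..Nf. pc i) = 1 \<and> (\<forall>i\<in>{1..Nf}. pc i \<ge> 0)"

definition optimal :: "nat \<Rightarrow> real \<Rightarrow> real \<Rightarrow> real \<Rightarrow> (nat \<Rightarrow> real) \<Rightarrow> bool" where
  "optimal Nf \<beta> lam rc pc \<longleftrightarrow> feasible Nf pc \<and>
     (\<forall>q. feasible Nf q \<longrightarrow> offload Nf \<beta> lam rc q \<le> offload Nf \<beta> lam rc pc)"

end

theory Submission
  imports Defs
begin

text \<open>
  The objective is a sum of strictly concave functions of the caching probabilities, so by the
  tangent-line bound for \<open>1 - exp (-c x)\<close> a feasible point satisfying the KKT conditions is the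
  unique maximiser. Writing \<open>c = \<lambda>\<pi>r\<^sub>c\<^sup>2\<close>, the water-filling point that caches the \<open>k\<close>
  most popular files equalises the marginal gains \<open>i\<^sup>-\<^sup>\<beta> exp (-c p\<^sub>c(i))\<close> for \<open>i \<le> k\<close>;
  its smallest entry \<open>p\<^sub>c(k)\<close> is positive exactly when \<open>k\<^sup>k/k! < exp (c/\<beta>)\<close>, and the marginal
  gain of every uncached file stays below the common value exactly when
  \<open>exp (c/\<beta>) \<le> (k+1)\<^sup>k/k! = (k+1)\<^sup>k\<^sup>+\<^sup>1/(k+1)!\<close>. Hence \<open>i\<^sup>*\<close> is the last \<open>k\<close> with
  \<open>k\<^sup>k/k! < exp (c/\<beta>)\<close>. Its bounds come from \<open>x\<^sup>n/n! \<le> exp x\<close> and from the Stirling-type bound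
  \<open>ln k! \<le> 1 + (k + 1/2) ln k - k\<close>.
\<close>

lemma ln_add_one_ge_two_mult_div:
  fixes x :: real
  assumes "0 \<le> x"
  shows "2 * x / (2 + x) \<le> ln (1 + x)"
proof -
  let ?f = "\<lambda>t::real. ln (1 + t) - 2 * t / (2 + t)"
  have "?f 0 \<le> ?f x"
  proof (rule DERIV_nonneg_imp_nondecreasing[OF assms])
    fix t :: real
    assume t: "0 \<le> t" "t \<le> x"
    have "DERIV ?f t :> 1 / (1 + t) - (2 * (2 + t) - 2 * t) / (2 + t)^2"
      using t by (auto intro!: derivative_eq_intros simp: power2_eq_square)
    moreover have "1 / (1 + t) - (2 * (2 + t) - 2 * t) / (2 + t)^2 = t^2 / ((1 + t) * (2 + t)^2)"
      using t by (simp add: divide_simps) algebra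
    moreover have "0 \<le> t^2 / ((1 + t) * (2 + t)^2)"
      using t by simp
    ultimately show "\<exists>y. DERIV ?f t :> y \<and> 0 \<le> y"
      by auto
  qed
  then show ?thesis
    by simp
qed

lemma ln_fact_eq_sum_ln: "ln (fact k :: real) = (\<Sum>j=1..k. ln (real j))"
  unfolding fact_prod by (subst of_nat_prod) (subst ln_prod, auto)

lemma ln_fact_le:
  assumes "1 \<le> k"
  shows "ln (fact k :: real) \<le> 1 + (real k + 1/2) * ln (real k) - real k"
  using assms
proof (induction k rule: dec_induct)
  case (step k)
  have k: "1 \<le> real k"
    using step by simp
  have "2 / (2 * real k + 1) = 2 * (1 / real k) / (2 + 1 / real k)"
    using k by (simp add: field_simps)
  also have "\<dots> \<le> ln (1 + 1 / real k)"
    by (rule ln_add_one_ge_two_mult_div) simp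
  also have "\<dots> = ln (real k + 1) - ln (real k)"
    using k by (simp add: field_simps ln_div)
  finally have "1 \<le> (real k + 1/2) * (ln (real k + 1) - ln (real k))"
    using k by (simp add: field_simps)
  moreover have "ln (fact (Suc k) :: real) = ln (real k + 1) + ln (fact k)"
    by (simp add: ln_mult add.commute)
  ultimately show ?case
    using step.IH by (simp add: algebra_simps)
qed simp

lemma power_div_fact_le_exp:
  fixes x :: real
  assumes "0 \<le> x"
  shows "x ^ n / fact n \<le> exp x"
proof -
  have "(\<Sum>m\<in>{n}. inverse (fact m) * x ^ m) \<le> (\<Sum>m. inverse (fact m) * x ^ m)"
    using assms by (intro sum_le_suminf summable_exp) auto
  then show ?thesis
    by (simp add: exp_def field_simps)
qed

lemma power_div_fact_Suc: "real (k + 1) ^ (k + 1) / fact (k + 1) = real (k + 1) ^ k / fact k"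
  by (simp add: field_simps del: of_nat_Suc)

lemma power_div_fact_less_exp_iff:
  assumes "0 < m"
  shows "real m ^ k / fact k < exp a \<longleftrightarrow> real k * ln (real m) - ln (fact k) < a"
proof -
  have "0 < real m ^ k / fact k"
    using assms by simp
  then have "real m ^ k / fact k < exp a \<longleftrightarrow> ln (real m ^ k / fact k) < a"
    using ln_ge_iff linorder_not_le by blast
  also have "ln (real m ^ k / fact k) = real k * ln (real m) - ln (fact k)"
    using assms by (simp add: ln_div ln_realpow)
  finally show ?thesis .
qed

lemma ex_last_before_failure:
  assumes "P 1" "\<not> P n" "1 \<le> n"
  shows "\<exists>k. 1 \<le> k \<and> k < n \<and> P k \<and> \<not> P (Suc k)"
  using assms(3,2)
proof (induction n rule: dec_induct)
  case (step n)
  then show ?case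
    by (cases "P n") (auto intro: less_SucI)
qed (use assms(1) in simp)

lemma one_minus_exp_le_tangent:
  fixes c p q :: real
  shows "1 - exp (-c * q) \<le> 1 - exp (-c * p) + c * exp (-c * p) * (q - p)"
    and "c \<noteq> 0 \<Longrightarrow> q \<noteq> p \<Longrightarrow>
           1 - exp (-c * q) < 1 - exp (-c * p) + c * exp (-c * p) * (q - p)"
proof -
  have split: "exp (-c * q) = exp (-c * p) * exp (-(c * (q - p)))"
    by (simp add: exp_add[symmetric] algebra_simps)
  have "exp (-c * p) * (1 - c * (q - p)) \<le> exp (-c * q)"
    unfolding split by (intro mult_left_mono exp_minus_ge) auto
  then show "1 - exp (-c * q) \<le> 1 - exp (-c * p) + c * exp (-c * p) * (q - p)"
    by (simp add: algebra_simps)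
  assume "c \<noteq> 0" "q \<noteq> p"
  then have "exp (-c * p) * (1 - c * (q - p)) < exp (-c * q)"
    unfolding split by (intro mult_strict_left_mono) (auto simp: exp_minus_greater)
  then show "1 - exp (-c * q) < 1 - exp (-c * p) + c * exp (-c * p) * (q - p)"
    by (simp add: algebra_simps)
qed

lemma kkt_exp_objective:
  fixes w P q :: "'a \<Rightarrow> real"
  assumes "finite I" and "0 < c" and w: "\<And>i. i \<in> I \<Longrightarrow> 0 < w i"
    and sums: "sum q I = sum P I" and q: "\<And>i. i \<in> I \<Longrightarrow> 0 \<le> q i"
    and marginal_le: "\<And>i. i \<in> I \<Longrightarrow> w i * exp (-c * P i) \<le> \<mu>"
    and marginal_eq: "\<And>i. i \<in> I \<Longrightarrow> P i \<noteq> 0 \<Longrightarrow> w i * exp (-c * P i) = \<mu>"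
    and "\<exists>i\<in>I. q i \<noteq> P i"
  shows "(\<Sum>i\<in>I. w i * (1 - exp (-c * q i))) < (\<Sum>i\<in>I. w i * (1 - exp (-c * P i)))"
proof -
  let ?F = "\<lambda>x i. w i * (1 - exp (-c * x))"
  let ?D = "\<lambda>i. c * (q i - P i)"
  have multiplier: "w i * exp (-c * P i) * ?D i \<le> \<mu> * ?D i" if "i \<in> I" for i
    using that marginal_le[OF that] marginal_eq[OF that] q[OF that] \<open>0 < c\<close>
    by (cases "P i = 0") (auto intro: mult_right_mono)
  have tangent: "?F (q i) i \<le> ?F (P i) i + w i * exp (-c * P i) * ?D i" if "i \<in> I" for i
    using mult_left_mono[OF one_minus_exp_le_tangent(1) less_imp_le[OF w[OF that]]]
    by (simp add: algebra_simps)
  have le: "?F (q i) i \<le> ?F (P i) i + \<mu> * ?D i" if "i \<in> I" for i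
    using tangent[OF that] multiplier[OF that] by linarith
  have total: "(\<Sum>i\<in>I. ?F (P i) i + \<mu> * ?D i) = (\<Sum>i\<in>I. ?F (P i) i)"
    using sums by (simp add: sum.distrib sum_subtractf sum_distrib_left[symmetric] right_diff_distrib)
  obtain i where i: "i \<in> I" "q i \<noteq> P i"
    using \<open>\<exists>i\<in>I. q i \<noteq> P i\<close> by blast
  have "?F (q i) i < ?F (P i) i + w i * exp (-c * P i) * ?D i"
    using mult_strict_left_mono[OF one_minus_exp_le_tangent(2) w] i \<open>0 < c\<close>
    by (simp add: algebra_simps)
  then have "?F (q i) i < ?F (P i) i + \<mu> * ?D i"
    using multiplier[OF i(1)] by linarith
  then show "(\<Sum>i\<in>I. ?F (q i) i) < (\<Sum>i\<in>I. ?F (P i) i)"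
    unfolding total[symmetric] using i le \<open>finite I\<close> by (intro sum_strict_mono_ex1) auto
qed

lemma offload_eq_sum_div:
  "offload Nf \<beta> lam rc q =
     (\<Sum>i=1..Nf. real i powr (-\<beta>) * (1 - exp (- (lam * pi * rc^2) * q i)))
       / (\<Sum>j=1..Nf. real j powr (-\<beta>))"
  unfolding offload_def zipf_def sum_divide_distrib by (intro sum.cong) (simp_all add: algebra_simps)

lemma optimal_iff_eq_unique_maximiser:
  assumes "feasible Nf P"
    and "\<And>q. feasible Nf q \<Longrightarrow> \<exists>i\<in>{1..Nf}. q i \<noteq> P i \<Longrightarrow>
           offload Nf \<beta> lam rc q < offload Nf \<beta> lam rc P"
  shows "optimal Nf \<beta> lam rc pc \<longleftrightarrow> (\<forall>i\<in>{1..Nf}. pc i = P i)"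
proof
  assume opt: "optimal Nf \<beta> lam rc pc"
  show "\<forall>i\<in>{1..Nf}. pc i = P i"
  proof (rule ccontr)
    assume "\<not> (\<forall>i\<in>{1..Nf}. pc i = P i)"
    then have "offload Nf \<beta> lam rc pc < offload Nf \<beta> lam rc P"
      using assms(2)[of pc] opt unfolding optimal_def by blast
    moreover have "offload Nf \<beta> lam rc P \<le> offload Nf \<beta> lam rc pc"
      using assms(1) opt unfolding optimal_def by blast
    ultimately show False
      by simp
  qed
next
  assume eq: "\<forall>i\<in>{1..Nf}. pc i = P i"
  have "(\<Sum>i=1..Nf. pc i) = (\<Sum>i=1..Nf. P i)"
    using eq by (intro sum.cong) auto
  then have "feasible Nf pc"
    using assms(1) eq unfolding feasible_def by simp
  moreover have "offload Nf \<beta> lam rc pc = offload Nf \<beta> lam rc P"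
    unfolding offload_def using eq by (intro sum.cong) auto
  moreover have "offload Nf \<beta> lam rc q \<le> offload Nf \<beta> lam rc P" if "feasible Nf q" for q
  proof (cases "\<exists>i\<in>{1..Nf}. q i \<noteq> P i")
    case False
    then have "offload Nf \<beta> lam rc q = offload Nf \<beta> lam rc P"
      unfolding offload_def by (intro sum.cong) auto
    then show ?thesis
      by simp
  qed (use assms(2)[OF that] in simp)
  ultimately show "optimal Nf \<beta> lam rc pc"
    unfolding optimal_def by simp
qed

text \<open>The paper's solution with \<open>i\<^sup>* = k\<close> and \<open>c = \<lambda>\<pi>r\<^sub>c\<^sup>2\<close>.\<close>
definition waterfill :: "real \<Rightarrow> real \<Rightarrow> nat \<Rightarrow> nat \<Rightarrow> real" where
  "waterfill \<beta> c k i =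
     (if i \<le> k then \<beta> / (c * real k) * (\<Sum>j=1..k. ln (real j / real i)) + 1 / real k else 0)"

lemma sum_ln_div_eq:
  assumes "1 \<le> i"
  shows "(\<Sum>j=1..k. ln (real j / real i)) = ln (fact k) - real k * ln (real i)"
  using assms by (simp add: ln_div sum_subtractf ln_fact_eq_sum_ln)

lemma mult_waterfill_eq:
  assumes "0 < c" "1 \<le> i" "i \<le> k"
  shows "c * waterfill \<beta> c k i = (\<beta> * (ln (fact k) - real k * ln (real i)) + c) / real k"
  using assms unfolding waterfill_def sum_ln_div_eq[OF assms(2)] by (simp add: field_simps)

lemma sum_waterfill:
  assumes "1 \<le> k" "k \<le> N"
  shows "(\<Sum>i=1..N. waterfill \<beta> c k i) = 1"
proof -
  have "(\<Sum>i=1..N. waterfill \<beta> c k i) = (\<Sum>i=1..k. waterfill \<beta> c k i)"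
    using assms by (intro sum.mono_neutral_right) (auto simp: waterfill_def)
  also have "\<dots> = (\<Sum>i=1..k. \<beta> / (c * real k) * (ln (fact k) - real k * ln (real i)) + 1 / real k)"
  proof (intro sum.cong refl)
    fix i
    assume "i \<in> {1..k}"
    then show "waterfill \<beta> c k i = \<beta> / (c * real k) * (ln (fact k) - real k * ln (real i)) + 1 / real k"
      using sum_ln_div_eq[of i k] by (simp add: waterfill_def)
  qed
  also have "\<dots> = \<beta> / (c * real k) * (\<Sum>i=1..k. ln (fact k) - real k * ln (real i)) + 1"
    using assms(1) by (simp add: sum.distrib sum_distrib_left)
  also have "(\<Sum>i=1..k. ln (fact k) - real k * ln (real i)) = 0"
    by (simp add: sum_subtractf sum_distrib_left[symmetric] ln_fact_eq_sum_ln)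
  finally show ?thesis
    by simp
qed

lemma waterfill_nonneg:
  assumes "0 < \<beta>" "0 < c" "1 \<le> i" and small: "real k ^ k / fact k < exp (c / \<beta>)"
  shows "0 \<le> waterfill \<beta> c k i"
proof (cases "i \<le> k")
  case True
  have "real k * ln (real k) - ln (fact k) < c / \<beta>"
    using small True \<open>1 \<le> i\<close> by (simp add: power_div_fact_less_exp_iff)
  then have "0 < \<beta> * (ln (fact k) - real k * ln (real k)) + c"
    using \<open>0 < \<beta>\<close> by (simp add: field_simps)
  also have "\<dots> \<le> \<beta> * (ln (fact k) - real k * ln (real i)) + c"
    using True \<open>1 \<le> i\<close> \<open>0 < \<beta>\<close> by (intro add_right_mono mult_left_mono diff_left_mono) auto
  finally have "0 \<le> c * waterfill \<beta> c k i"
    using True \<open>1 \<le> i\<close> \<open>0 < c\<close> by (simp add: mult_waterfill_eq)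
  then show ?thesis
    using \<open>0 < c\<close> by (simp add: zero_le_mult_iff)
qed (simp add: waterfill_def)

lemma waterfill_marginal_eq:
  assumes "0 < c" "1 \<le> i" "i \<le> k"
  shows "real i powr (-\<beta>) * exp (-c * waterfill \<beta> c k i) = exp (-(\<beta> * ln (fact k) + c) / real k)"
proof -
  have "-c * waterfill \<beta> c k i = \<beta> * ln (real i) - (\<beta> * ln (fact k) + c) / real k"
    using mult_waterfill_eq[OF assms, of \<beta>] assms by (simp add: field_simps)
  moreover have "real i powr (-\<beta>) = exp (-\<beta> * ln (real i))"
    using assms by (simp add: powr_def)
  ultimately have "real i powr (-\<beta>) * exp (-c * waterfill \<beta> c k i)
                     = exp (-\<beta> * ln (real i) + (\<beta> * ln (real i) - (\<beta> * ln (fact k) + c) / real k))"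
    by (simp only: exp_add)
  then show ?thesis
    by (simp add: minus_divide_left)
qed

lemma waterfill_marginal_le:
  assumes "0 < \<beta>" "1 \<le> k" "k < i" and large: "exp (c / \<beta>) \<le> real (k + 1) ^ k / fact k"
  shows "real i powr (-\<beta>) * exp (-c * waterfill \<beta> c k i) \<le> exp (-(\<beta> * ln (fact k) + c) / real k)"
proof -
  have "c / \<beta> \<le> real k * ln (real (k + 1)) - ln (fact k)"
    using large power_div_fact_less_exp_iff[of "k + 1" k "c / \<beta>"] by linarith
  then have "\<beta> * ln (fact k) + c \<le> real k * (\<beta> * ln (real (k + 1)))"
    using \<open>0 < \<beta>\<close> by (simp add: field_simps)
  also have "\<dots> \<le> real k * (\<beta> * ln (real i))"
    using assms by (intro mult_left_mono) auto
  finally have "-\<beta> * ln (real i) \<le> -(\<beta> * ln (fact k) + c) / real k"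
    using \<open>1 \<le> k\<close> by (simp add: field_simps)
  moreover have "real i powr (-\<beta>) = exp (-\<beta> * ln (real i))"
    using assms by (simp add: powr_def)
  moreover have "waterfill \<beta> c k i = 0"
    using assms by (simp add: waterfill_def)
  ultimately show ?thesis
    by simp
qed

lemma optimal_iff_waterfill:
  fixes Nf k :: nat and \<beta> lam rc :: real
  defines "c \<equiv> lam * pi * rc^2"
  assumes "1 \<le> k" "k \<le> Nf" "0 < \<beta>" "0 < lam" "0 < rc"
    and small: "real k ^ k / fact k < exp (c / \<beta>)"
    and large: "k < Nf \<Longrightarrow> exp (c / \<beta>) \<le> real (k + 1) ^ k / fact k"
  shows "optimal Nf \<beta> lam rc pc \<longleftrightarrow> (\<forall>i\<in>{1..Nf}. pc i = waterfill \<beta> c k i)"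
proof (rule optimal_iff_eq_unique_maximiser)
  have "0 < c"
    using assms(5,6) by (simp add: c_def)
  let ?P = "waterfill \<beta> c k"
  let ?w = "\<lambda>i. real i powr (-\<beta>)"
  define \<mu> where "\<mu> = exp (-(\<beta> * ln (fact k) + c) / real k)"
  show "feasible Nf ?P"
    unfolding feasible_def using sum_waterfill[OF assms(2,3)] waterfill_nonneg[OF assms(4) \<open>0 < c\<close> _ small]
    by auto
  fix q
  assume q: "feasible Nf q" and "\<exists>i\<in>{1..Nf}. q i \<noteq> ?P i"
  have "(\<Sum>i=1..Nf. ?w i * (1 - exp (-c * q i))) < (\<Sum>i=1..Nf. ?w i * (1 - exp (-c * ?P i)))"
  proof (rule kkt_exp_objective[where \<mu> = \<mu>])
    show "sum q {1..Nf} = sum ?P {1..Nf}"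
      using q sum_waterfill[OF assms(2,3)] by (simp add: feasible_def)
    show "?w i * exp (-c * ?P i) \<le> \<mu>" if "i \<in> {1..Nf}" for i
    proof (cases "i \<le> k")
      case True
      then show ?thesis
        using that \<open>0 < c\<close> waterfill_marginal_eq[of c i k \<beta>] by (simp add: \<mu>_def)
    next
      case False
      with that have "k < Nf"
        by simp
      with False show ?thesis
        unfolding \<mu>_def using assms(2,4) large by (intro waterfill_marginal_le) auto
    qed
    show "?w i * exp (-c * ?P i) = \<mu>" if "i \<in> {1..Nf}" "?P i \<noteq> 0" for i
    proof -
      have "i \<le> k"
        using that(2) by (auto simp: waterfill_def split: if_splits)
      then show ?thesis
        using that \<open>0 < c\<close> waterfill_marginal_eq[of c i k \<beta>] by (simp add: \<mu>_def)
    qed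
  qed (use q \<open>0 < c\<close> \<open>\<exists>i\<in>{1..Nf}. q i \<noteq> ?P i\<close> in \<open>auto simp: feasible_def\<close>)
  moreover have "0 < (\<Sum>j=1..Nf. ?w j)"
    using assms(2,3) by (intro sum_pos) auto
  ultimately show "offload Nf \<beta> lam rc q < offload Nf \<beta> lam rc ?P"
    unfolding offload_eq_sum_div c_def[symmetric] by (rule divide_strict_right_mono)
qed

lemma threshold_lower_bound:
  assumes "exp a \<le> real (k + 1) ^ k / fact k"
  shows "a - 1 \<le> real k"
proof -
  have "real (k + 1) ^ k / fact k \<le> exp (real (k + 1))"
    using power_div_fact_le_exp[of "real (k + 1)" "k + 1"] by (simp only: power_div_fact_Suc)
  with assms have "exp a \<le> exp (real (k + 1))"
    by (rule order.trans)
  then show ?thesis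
    by simp
qed

lemma threshold_upper_bound:
  assumes "1 \<le> k" "k \<le> N" and small: "real k ^ k / fact k < exp a"
  shows "real k \<le> a + ln (sqrt (2 * pi * real N)) + 1"
proof -
  have "real k * ln (real k) - ln (fact k) < a"
    using small assms(1) by (simp add: power_div_fact_less_exp_iff)
  then have "real k - 1 - ln (real k) / 2 < a"
    using ln_fact_le[OF assms(1)] by (simp add: algebra_simps)
  moreover have "real k \<le> 2 * pi * real N"
  proof -
    have "real k \<le> 1 * real N"
      using assms by simp
    also have "\<dots> \<le> 2 * pi * real N"
      using pi_ge_two by (intro mult_right_mono) auto
    finally show ?thesis .
  qed
  then have "ln (real k) \<le> ln (2 * pi * real N)"
    using assms(1) by simp
  moreover have "ln (sqrt (2 * pi * real N)) = ln (2 * pi * real N) / 2"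
    using assms by (subst ln_sqrt) auto
  ultimately show ?thesis
    by linarith
qed

theorem proposition1:
  fixes Nf :: nat and \<beta> lam rc :: real
  assumes "Nf \<ge> 1" and "\<beta> > 0" and "lam > 0" and "rc > 0"
  shows "(real Nf ^ Nf / fact Nf < exp (lam * pi * rc^2 / \<beta>) \<longrightarrow>
            (\<forall>pc. optimal Nf \<beta> lam rc pc \<longleftrightarrow>
               (\<forall>i\<in>{1..Nf}. pc i =
                  \<beta> / (lam * pi * rc^2 * real Nf) * (\<Sum>j=1..Nf. ln (real j / real i))
                  + 1 / real Nf)))
       \<and> (\<not> (real Nf ^ Nf / fact Nf < exp (lam * pi * rc^2 / \<beta>)) \<longrightarrow>
            (\<exists>istar::nat. 1 \<le> istar \<and> istar \<le> Nf \<and>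
               real (istar + 1) ^ istar / fact istar \<ge> exp (lam * pi * rc^2 / \<beta>) \<and>
               real istar ^ istar / fact istar < exp (lam * pi * rc^2 / \<beta>) \<and>
               lam * pi * rc^2 / \<beta> - 1 \<le> real istar \<and>
               real istar \<le> lam * pi * rc^2 / \<beta> + ln (sqrt (2 * pi * real Nf)) + 1 \<and>
               (\<forall>pc. optimal Nf \<beta> lam rc pc \<longleftrightarrow>
                  (\<forall>i\<in>{1..Nf}. pc i =
                     (if i \<le> istar then
                        \<beta> / (lam * pi * rc^2 * real istar) * (\<Sum>j=1..istar. ln (real j / real i))
                        + 1 / real istar
                      else 0)))))"
proof -
  define a where "a = lam * pi * rc^2 / \<beta>"
  have "0 < a"
    using assms by (simp add: a_def)
  note optimal = optimal_iff_waterfill[OF _ _ assms(2-4), folded a_def, unfolded waterfill_def]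
  show ?thesis
  proof (cases "real Nf ^ Nf / fact Nf < exp a")
    case True
    then show ?thesis
      unfolding a_def[symmetric] using optimal[of Nf Nf] assms(1) by simp
  next
    case False
    then obtain k where k: "1 \<le> k" "k < Nf" "real k ^ k / fact k < exp a"
      and "\<not> real (k + 1) ^ (k + 1) / fact (k + 1) < exp a"
      using ex_last_before_failure[of "\<lambda>k. real k ^ k / fact k < exp a"] assms(1) \<open>0 < a\<close> by auto
    then have "exp a \<le> real (k + 1) ^ k / fact k"
      by (simp only: power_div_fact_Suc not_less)
    with k False show ?thesis
      unfolding a_def[symmetric]
      using optimal[of k Nf] threshold_lower_bound threshold_upper_bound[of k Nf a]
      by (auto intro!: exI[of _ k])
  qed
qed

end
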